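(* Let $f:\subseteq X\rightrightarrows Y$ be a problem between represented spaces. Then (1) if $X$ is multi-retraceable, then $\overline{f}\le_{sW}\mathsf{T}f$; (2) if $Y$ is multi-retraceable, then $\mathsf{T}f\le_{sW}\overline{f}$.
   Context: Represented space $(X,\delta_X)$: set with surjective partial $\delta_X:\subseteq\mathbb{N}^\mathbb{N}\to X$. A problem $f:\subseteq X\rightrightarrows Y$ is a partial multi-valued map with nonempty values on its domain; $F:\subseteq\mathbb{N}^\mathbb{N}\to\mathbb{N}^\mathbb{N}$ realizes $f$ ($F\vdash f$) if $\delta_YF(p)\in f(\delta_X(p))$ whenever $\delta_X(p)\in\mathrm{dom}(f)$. With $\langle p,q\rangle(2n)=p(n)$, $\langle p,q\rangle(2n+1)=q(n)$: $f\le_W g$ iff there are computable partial $H,K$ with $H\langle\mathrm{id},GK\rangle\vdash f$ for all $G\vdash g$; $f\le_{sW}g$ iff there are computable $H,K$ with $HGK\vdash f$ for all $G\vdash g$; $\equiv_W,\equiv_{sW}$, $<_W$ are the induced equivalences and strict orders. For $p\in\mathbb{N}^\mathbb{N}$, $p-1$ is the concatenation of $p(0)-1,p(1)-1,\dots$ with $0-1$ the empty word. The completion of $(X,\delta_X)$ is $\overline X=X\cup\{\bot\}$ with $\delta_{\overline X}(p)=\delta_X(p-1)$ if $p-1$ is an infinite sequence in $\mathrm{dom}(\delta_X)$, $\delta_{\overline X}(p)=\bot$ otherwise. The completion of $f$ is $\overline f:\overline X\rightrightarrows\overline Y$, $\overline f(x)=f(x)$ for $x\in\mathrm{dom}(f)$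 and $\overline f(x)=\overline Y$ otherwise. The totalization is $\mathsf{T}f:X\rightrightarrows Y$, $\mathsf{T}f(x)=f(x)$ for $x\in\mathrm{dom}(f)$ and $\mathsf{T}f(x)=Y$ otherwise. A space $X$ is multi-retraceable if there is a computable multi-valued $r:\overline X\rightrightarrows X$ with $r(x)=\{x\}$ for all $x\in X$. *)

theory Defs
  imports "HOL-Library.Nat_Bijection" "HOL-Library.Infinite_Set"
begin

type_synonym baire = "nat \<Rightarrow> nat"

text \<open>Total recursive functions (Kleene): n-ary functions, represented as functions on
  lists, only ever evaluated on argument lists of length n.\<close>
inductive total_recursive :: "nat \<Rightarrow> (nat list \<Rightarrow> nat) \<Rightarrow> bool" where
  zero: "total_recursive n (\<lambda>_. 0)"
| succ: "total_recursive 1 (\<lambda>xs. Suc (hd xs))"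
| proj: "i < n \<Longrightarrow> total_recursive n (\<lambda>xs. xs ! i)"
| comp: "total_recursive m g \<Longrightarrow> length fs = m \<Longrightarrow> (\<forall>f\<in>set fs. total_recursive n f)
         \<Longrightarrow> total_recursive n (\<lambda>xs. g (map (\<lambda>f. f xs) fs))"
| prim: "total_recursive n g \<Longrightarrow> total_recursive (Suc (Suc n)) h
         \<Longrightarrow> total_recursive (Suc n)
               (\<lambda>xs. rec_nat (g (tl xs)) (\<lambda>k acc. h (k # acc # tl xs)) (hd xs))"
| mu: "total_recursive (Suc n) g \<Longrightarrow> (\<forall>xs. length xs = n \<longrightarrow> (\<exists>y. g (y # xs) = 0))
       \<Longrightarrow> total_recursive n (\<lambda>xs. LEAST y. g (y # xs) = 0)"

definition computable_word :: "(nat list \<Rightarrow> nat list) \<Rightarrow> bool" where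
  "computable_word h \<longleftrightarrow>
     (\<exists>g. total_recursive 1 g \<and> (\<forall>w. list_encode (h w) = g [list_encode w]))"

definition init :: "baire \<Rightarrow> nat \<Rightarrow> nat list" where
  "init p m = map p [0..<m]"

text \<open>A partial map on Baire space is computable iff on its domain it is the limit of a
  computable word function applied to the finite prefixes of the input
  (equivalently: it is a restriction of a function computed by a Type-2 machine).\<close>
definition computable :: "(baire \<Rightarrow> baire option) \<Rightarrow> bool" where
  "computable F \<longleftrightarrow> (\<exists>h. computable_word h \<and>
     (\<forall>p q. F p = Some q \<longrightarrow>
        (\<forall>m. h (init p m) = init q (length (h (init p m)))) \<and>
        (\<forall>n. \<exists>m. n \<le> length (h (init p m)))))"

text \<open>A represented space is given by its partial surjective representation
  \<open>\<delta> :: baire \<Rightarrow> 'a option\<close>; the underlying set is the range of \<open>\<delta>\<close>.\<close>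
definition space :: "(baire \<Rightarrow> 'a option) \<Rightarrow> 'a set" where
  "space \<delta> = {x. \<exists>p. \<delta> p = Some x}"

text \<open>A problem \<open>f :\<subseteq> X \<rightrightarrows> Y\<close> is a domain \<open>D\<close> and a value map \<open>f\<close>.\<close>
definition problem :: "(baire \<Rightarrow> 'a option) \<Rightarrow> (baire \<Rightarrow> 'b option) \<Rightarrow> 'a set \<Rightarrow> ('a \<Rightarrow> 'b set) \<Rightarrow> bool" where
  "problem \<delta>X \<delta>Y D f \<longleftrightarrow> D \<subseteq> space \<delta>X \<and> (\<forall>x\<in>D. f x \<noteq> {} \<and> f x \<subseteq> space \<delta>Y)"

definition realizes :: "(baire \<Rightarrow> 'a option) \<Rightarrow> (baire \<Rightarrow> 'b option) \<Rightarrow> 'a set \<Rightarrow> ('a \<Rightarrow> 'b set)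
                        \<Rightarrow> (baire \<Rightarrow> baire option) \<Rightarrow> bool" where
  "realizes \<delta>X \<delta>Y D f F \<longleftrightarrow>
     (\<forall>p x. \<delta>X p = Some x \<and> x \<in> D \<longrightarrow>
        (\<exists>q y. F p = Some q \<and> \<delta>Y q = Some y \<and> y \<in> f x))"

definition sW_le ::
  "(baire \<Rightarrow> 'a option) \<Rightarrow> (baire \<Rightarrow> 'b option) \<Rightarrow> 'a set \<Rightarrow> ('a \<Rightarrow> 'b set) \<Rightarrow>
   (baire \<Rightarrow> 'c option) \<Rightarrow> (baire \<Rightarrow> 'd option) \<Rightarrow> 'c set \<Rightarrow> ('c \<Rightarrow> 'd set) \<Rightarrow> bool" where
  "sW_le \<delta>X \<delta>Y D f \<delta>U \<delta>V E g \<longleftrightarrow>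
     (\<exists>H K. computable H \<and> computable K \<and>
        (\<forall>G. realizes \<delta>U \<delta>V E g G \<longrightarrow>
              realizes \<delta>X \<delta>Y D f (\<lambda>p. Option.bind (Option.bind (K p) G) H)))"

definition minus1 :: "baire \<Rightarrow> baire option" where
  "minus1 p = (if infinite {i. p i \<noteq> 0}
               then Some (\<lambda>n. p (enumerate {i. p i \<noteq> 0} n) - 1) else None)"

text \<open>Completion \<open>\<overline>X = X \<union> {\<bottom>}\<close>, realised on \<open>'a option\<close> with \<open>None = \<bottom>\<close>.\<close>
definition completion :: "(baire \<Rightarrow> 'a option) \<Rightarrow> baire \<Rightarrow> 'a option option" where
  "completion \<delta> p = Some (Option.bind (minus1 p) \<delta>)"

definition comp_dom :: "(baire \<Rightarrow> 'a option) \<Rightarrow> 'a option set" where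
  "comp_dom \<delta>X = space (completion \<delta>X)"

definition comp_prob :: "(baire \<Rightarrow> 'b option) \<Rightarrow> 'a set \<Rightarrow> ('a \<Rightarrow> 'b set) \<Rightarrow> 'a option \<Rightarrow> 'b option set" where
  "comp_prob \<delta>Y D f xo = (case xo of Some x \<Rightarrow> if x \<in> D then Some ` f x else space (completion \<delta>Y)
                                   | None \<Rightarrow> space (completion \<delta>Y))"

definition tot_prob :: "(baire \<Rightarrow> 'b option) \<Rightarrow> 'a set \<Rightarrow> ('a \<Rightarrow> 'b set) \<Rightarrow> 'a \<Rightarrow> 'b set" where
  "tot_prob \<delta>Y D f x = (if x \<in> D then f x else space \<delta>Y)"

definition multi_retraceable :: "(baire \<Rightarrow> 'a option) \<Rightarrow> bool" where
  "multi_retraceable \<delta>X \<longleftrightarrow>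
     (\<exists>r. problem (completion \<delta>X) \<delta>X (comp_dom \<delta>X) r \<and>
          (\<forall>x\<in>space \<delta>X. r (Some x) = {x}) \<and>
          (\<exists>F. computable F \<and> realizes (completion \<delta>X) \<delta>X (comp_dom \<delta>X) r F))"

end

theory Submission
  imports Defs
begin

text \<open>Adding 1 to every entry turns a name of \<open>x \<in> X\<close> into a name of \<open>x \<in> \<overline>X\<close>, and this shift is
  computable. A multi-retraction of \<open>\<overline>X\<close> turns a name of \<open>x \<in> X \<subseteq> \<overline>X\<close> back into a name of \<open>x\<close>
  itself. Outside the domain of \<open>f\<close> both \<open>T f\<close> and \<open>\<overline>f\<close> accept every answer, so retracting the
  input and shifting the output reduces \<open>\<overline>f\<close> to \<open>T f\<close>, while shifting the input and retracting
  the output reduces \<open>T f\<close> to \<open>\<overline>f\<close>. The substance lies in the computability of the shift, that is,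
  of \<open>map Suc\<close> on codes of finite words, which is derived from Kleene's schemes.\<close>

definition recursive :: "nat \<Rightarrow> (nat list \<Rightarrow> nat) \<Rightarrow> bool" where
  "recursive n g \<longleftrightarrow> (\<exists>g'. total_recursive n g' \<and> (\<forall>xs. length xs = n \<longrightarrow> g' xs = g xs))"

lemma recursive_cong:
  "recursive n g \<Longrightarrow> (\<And>xs. length xs = n \<Longrightarrow> g xs = g' xs) \<Longrightarrow> recursive n g'"
  unfolding recursive_def by auto

lemma total_recursive_imp_recursive: "total_recursive n g \<Longrightarrow> recursive n g"
  unfolding recursive_def by blast

lemma recursive_proj: "i < n \<Longrightarrow> recursive n (\<lambda>xs. xs ! i)"
  by (rule total_recursive_imp_recursive, rule total_recursive.proj)

lemma recursive_comp:
  assumes "recursive m g" "length fs = m" "\<forall>f\<in>set fs. recursive n f"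
  shows "recursive n (\<lambda>xs. g (map (\<lambda>f. f xs) fs))"
proof -
  from assms(1) obtain g' where g': "total_recursive m g'" "\<forall>xs. length xs = m \<longrightarrow> g' xs = g xs"
    unfolding recursive_def by blast
  have "\<exists>fs'. length fs' = length fs \<and> (\<forall>f\<in>set fs'. total_recursive n f) \<and>
     (\<forall>xs. length xs = n \<longrightarrow> map (\<lambda>f. f xs) fs' = map (\<lambda>f. f xs) fs)"
    using assms(3)
  proof (induction fs)
    case Nil then show ?case by auto
  next
    case (Cons f fs)
    then obtain fs' where "length fs' = length fs" "\<forall>f\<in>set fs'. total_recursive n f"
      "\<forall>xs. length xs = n \<longrightarrow> map (\<lambda>f. f xs) fs' = map (\<lambda>f. f xs) fs" by auto
    moreover from Cons.prems obtain f' where "total_recursive n f'" "\<forall>xs. length xs = n \<longrightarrow> f' xs = f xs"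
      unfolding recursive_def by auto
    ultimately show ?case by (intro exI[of _ "f' # fs'"]) auto
  qed
  then obtain fs' where fs': "length fs' = length fs" "\<forall>f\<in>set fs'. total_recursive n f"
      "\<forall>xs. length xs = n \<longrightarrow> map (\<lambda>f. f xs) fs' = map (\<lambda>f. f xs) fs" by blast
  have "total_recursive n (\<lambda>xs. g' (map (\<lambda>f. f xs) fs'))"
    by (rule total_recursive.comp[OF g'(1)]) (use fs' assms(2) in auto)
  then show ?thesis unfolding recursive_def
    using fs' g' assms(2) by (intro exI[of _ "(\<lambda>xs. g' (map (\<lambda>f. f xs) fs'))"]) auto
qed

lemma recursive_comp1:
  assumes "recursive 1 (\<lambda>ys. s (hd ys))" "recursive n a"
  shows "recursive n (\<lambda>xs. s (a xs))"
  using recursive_comp[OF assms(1), of "[a]" n] assms(2) by simp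

lemma recursive_Suc: "recursive n a \<Longrightarrow> recursive n (\<lambda>xs. Suc (a xs))"
  by (rule recursive_comp1[OF total_recursive_imp_recursive[OF total_recursive.succ]])

lemma recursive_const: "recursive n (\<lambda>_. c)"
  by (induction c) (auto intro: recursive_Suc total_recursive_imp_recursive total_recursive.zero)

lemma recursive_drop:
  assumes g: "recursive n g" shows "recursive (k + n) (\<lambda>ys. g (drop k ys))"
proof -
  have "recursive (k + n) (\<lambda>ys. g (map (\<lambda>f. f ys) (map (\<lambda>i ys. ys ! (k + i)) [0..<n])))"
    by (rule recursive_comp[OF g]) (auto intro: recursive_proj)
  then show ?thesis
    by (rule recursive_cong) (auto simp: o_def nth_drop intro!: arg_cong[where f = g] nth_equalityI)
qed

lemma recursive_rec_nat:
  assumes g: "recursive n g" and h: "recursive (Suc (Suc n)) (\<lambda>ys. h (ys ! 0) (ys ! 1) (drop 2 ys))"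
    and a: "recursive n a"
  shows "recursive n (\<lambda>xs. rec_nat (g xs) (\<lambda>k acc. h k acc xs) (a xs))"
proof -
  from g h obtain g' h' where g': "total_recursive n g'" "\<forall>xs. length xs = n \<longrightarrow> g' xs = g xs"
    and h': "total_recursive (Suc (Suc n)) h'"
      "\<forall>ys. length ys = Suc (Suc n) \<longrightarrow> h' ys = h (ys ! 0) (ys ! 1) (drop 2 ys)"
    unfolding recursive_def by blast
  have "rec_nat (g' (tl ys)) (\<lambda>k acc. h' (k # acc # tl ys)) m =
        rec_nat (g (tl ys)) (\<lambda>k acc. h k acc (tl ys)) m" if "length ys = Suc n" for ys m
    using that g'(2) h'(2) by (induction m) auto
  then have "recursive (Suc n) (\<lambda>ys. rec_nat (g (tl ys)) (\<lambda>k acc. h k acc (tl ys)) (hd ys))"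
    using total_recursive.prim[OF g'(1) h'(1)] unfolding recursive_def by blast
  from recursive_comp[OF this, of "a # map (\<lambda>i xs. xs ! i) [0..<n]" n]
  have "recursive n (\<lambda>xs. rec_nat (g (map (\<lambda>i. xs ! i) [0..<n])) (\<lambda>k acc. h k acc (map (\<lambda>i. xs ! i) [0..<n])) (a xs))"
    using a by (simp add: o_def recursive_proj)
  then show ?thesis
    by (rule recursive_cong) (metis map_nth)
qed

lemma recursive_Least:
  assumes "recursive (Suc n) g" "\<And>xs. length xs = n \<Longrightarrow> \<exists>y. g (y # xs) = 0"
  shows "recursive n (\<lambda>xs. LEAST y. g (y # xs) = 0)"
proof -
  from assms obtain g' where g': "total_recursive (Suc n) g'" "\<forall>xs. length xs = Suc n \<longrightarrow> g' xs = g xs"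
    unfolding recursive_def by blast
  have "total_recursive n (\<lambda>xs. LEAST y. g' (y # xs) = 0)"
    by (rule total_recursive.mu[OF g'(1)]) (use assms(2) g'(2) in force)
  then show ?thesis unfolding recursive_def using g'(2) by (intro exI) auto
qed

lemma recursive_add:
  assumes a: "recursive n a" and b: "recursive n b" shows "recursive n (\<lambda>xs. a xs + b xs)"
proof -
  have "recursive n (\<lambda>xs. rec_nat (b xs) (\<lambda>k acc. Suc acc) (a xs))"
    by (rule recursive_rec_nat[OF b _ a]) (auto intro: recursive_Suc recursive_proj)
  moreover have "rec_nat y (\<lambda>k acc. Suc acc) x = x + y" for x y :: nat by (induction x) auto
  ultimately show ?thesis by simp
qed

lemma recursive_pred:
  assumes a: "recursive n a" shows "recursive n (\<lambda>xs. a xs - 1)"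
proof -
  have "recursive n (\<lambda>xs. rec_nat 0 (\<lambda>k acc. k) (a xs))"
    by (rule recursive_rec_nat[OF recursive_const _ a]) (auto intro: recursive_proj)
  moreover have "rec_nat 0 (\<lambda>k acc. k) x = x - 1" for x :: nat by (cases x) auto
  ultimately show ?thesis by simp
qed

lemma recursive_diff:
  assumes a: "recursive n a" and b: "recursive n b" shows "recursive n (\<lambda>xs. a xs - b xs)"
proof -
  have "recursive n (\<lambda>xs. rec_nat (a xs) (\<lambda>k acc. acc - 1) (b xs))"
    by (rule recursive_rec_nat[OF a _ b]) (use recursive_pred[OF recursive_proj, of 1] in simp)
  moreover have "rec_nat y (\<lambda>k acc. acc - 1) x = y - x" for x y :: nat by (induction x) auto
  ultimately show ?thesis by simp
qed

lemma recursive_if_zero: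
  assumes c: "recursive n c" and a: "recursive n a" and b: "recursive n b"
  shows "recursive n (\<lambda>xs. if c xs = 0 then a xs else b xs)"
proof -
  have "recursive (Suc (Suc n)) (\<lambda>ys. b (drop 2 ys))"
    using recursive_drop[OF b, of 2] by simp
  then have "recursive n (\<lambda>xs. rec_nat (a xs) (\<lambda>k acc. b xs) (c xs))"
    by (rule recursive_rec_nat[OF a _ c])
  moreover have "rec_nat x (\<lambda>k acc. y) z = (if z = 0 then x else y)" for x y z :: nat
    by (cases z) auto
  ultimately show ?thesis by simp
qed

lemma recursive_triangle:
  assumes a: "recursive n a" shows "recursive n (\<lambda>xs. triangle (a xs))"
proof -
  have "recursive n (\<lambda>xs. rec_nat 0 (\<lambda>k acc. acc + Suc k) (a xs))"
    by (rule recursive_rec_nat[OF recursive_const _ a]) (auto intro!: recursive_add recursive_Suc recursive_proj)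
  moreover have "rec_nat 0 (\<lambda>k acc. acc + Suc k) x = triangle x" for x :: nat by (induction x) auto
  ultimately show ?thesis by simp
qed

lemma recursive_funpow:
  assumes s: "recursive 1 (\<lambda>ys. s (hd ys))" and a: "recursive n a" and b: "recursive n b"
  shows "recursive n (\<lambda>xs. (s ^^ a xs) (b xs))"
proof -
  have "recursive n (\<lambda>xs. rec_nat (b xs) (\<lambda>k acc. s acc) (a xs))"
    by (rule recursive_rec_nat[OF b _ a]) (auto intro: recursive_comp1[OF s] recursive_proj)
  moreover have "rec_nat y (\<lambda>k acc. s acc) x = (s ^^ x) y" for x y :: nat by (induction x) auto
  ultimately show ?thesis by simp
qed

lemma recursive_prod_encode:
  "recursive n a \<Longrightarrow> recursive n b \<Longrightarrow> recursive n (\<lambda>xs. prod_encode (a xs, b xs))"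
  unfolding prod_encode_def by (simp add: recursive_add recursive_triangle)

lemma triangle_mono: "m \<le> n \<Longrightarrow> triangle m \<le> triangle n"
  by (induction n) (auto simp: le_Suc_eq)

lemma prod_decode_triangle: "triangle (fst (prod_decode c) + snd (prod_decode c)) + fst (prod_decode c) = c"
  using prod_decode_inverse[of c] by (simp add: prod_encode_def split: prod.splits)

lemma Least_triangle_prod_decode:
  "(LEAST s. Suc c \<le> triangle (Suc s)) = fst (prod_decode c) + snd (prod_decode c)"
proof (rule Least_equality)
  show "Suc c \<le> triangle (Suc (fst (prod_decode c) + snd (prod_decode c)))"
    using prod_decode_triangle[of c] by simp
next
  fix s assume "Suc c \<le> triangle (Suc s)"
  then show "fst (prod_decode c) + snd (prod_decode c) \<le> s"
    using prod_decode_triangle[of c] triangle_mono[of "Suc s" "fst (prod_decode c) + snd (prod_decode c)"]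
    by linarith
qed

lemma recursive_hd: "recursive 1 hd"
  by (rule recursive_cong[OF recursive_proj[of 0]]) (auto simp: length_Suc_conv)

lemma recursive_prod_decode_sum:
  "recursive 1 (\<lambda>ys. fst (prod_decode (hd ys)) + snd (prod_decode (hd ys)))"
proof -
  have "recursive (Suc 1) (\<lambda>ys. Suc (ys ! 1) - triangle (Suc (ys ! 0)))"
    by (intro recursive_diff recursive_Suc recursive_triangle recursive_proj) simp_all
  then have "recursive 1 (\<lambda>xs. LEAST y. Suc ((y # xs) ! 1) - triangle (Suc ((y # xs) ! 0)) = 0)"
  proof (rule recursive_Least)
    show "\<exists>y. Suc ((y # xs) ! 1) - triangle (Suc ((y # xs) ! 0)) = 0" for xs :: "nat list"
      by (rule exI[of _ "xs ! 0"]) simp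
  qed
  then show ?thesis
    by (rule recursive_cong) (auto simp: Least_triangle_prod_decode length_Suc_conv simp del: triangle_Suc)
qed

lemma recursive_fst_prod_decode:
  assumes "recursive n a" shows "recursive n (\<lambda>xs. fst (prod_decode (a xs)))"
proof -
  have "recursive 1 (\<lambda>ys. hd ys - triangle (fst (prod_decode (hd ys)) + snd (prod_decode (hd ys))))"
    by (intro recursive_diff recursive_triangle recursive_prod_decode_sum recursive_hd)
  then have "recursive 1 (\<lambda>ys. fst (prod_decode (hd ys)))"
    by (rule recursive_cong) (metis prod_decode_triangle diff_add_inverse)
  from recursive_comp1[OF this assms] show ?thesis .
qed

lemma recursive_snd_prod_decode:
  assumes "recursive n a" shows "recursive n (\<lambda>xs. snd (prod_decode (a xs)))"
proof -
  have "recursive 1 (\<lambda>ys. (fst (prod_decode (hd ys)) + snd (prod_decode (hd ys))) - fst (prod_decode (hd ys)))"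
    by (intro recursive_diff recursive_prod_decode_sum recursive_fst_prod_decode recursive_hd)
  then have "recursive 1 (\<lambda>ys. snd (prod_decode (hd ys)))"
    by simp
  from recursive_comp1[OF this assms] show ?thesis .
qed

definition rev_map_step :: "(nat \<Rightarrow> nat) \<Rightarrow> nat \<Rightarrow> nat" where
  "rev_map_step \<phi> s =
     (let c = fst (prod_decode s); acc = snd (prod_decode s)
      in if c = 0 then s
         else prod_encode (snd (prod_decode (c - 1)), Suc (prod_encode (\<phi> (fst (prod_decode (c - 1))), acc))))"

lemma rev_map_step_Nil: "rev_map_step \<phi> (prod_encode (0, a)) = prod_encode (0, a)"
  by (simp add: rev_map_step_def)

lemma rev_map_step_Cons:
  "rev_map_step \<phi> (prod_encode (list_encode (x # w), list_encode u)) =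
   prod_encode (list_encode w, list_encode (\<phi> x # u))"
  by (simp add: rev_map_step_def)

lemma length_le_list_encode: "length w \<le> list_encode w"
  by (induction w) (auto intro: le_trans[OF _ le_prod_encode_2])

lemma funpow_rev_map_step:
  "length w \<le> k \<Longrightarrow> (rev_map_step \<phi> ^^ k) (prod_encode (list_encode w, list_encode u)) =
     prod_encode (0, list_encode (rev (map \<phi> w) @ u))"
proof (induction w arbitrary: k u)
  case Nil
  then show ?case by (induction k) (simp_all add: rev_map_step_Nil)
next
  case (Cons x w)
  then obtain k' where "k = Suc k'" "length w \<le> k'" by (cases k) auto
  with Cons.IH[of k' "\<phi> x # u"] show ?case
    by (simp only: funpow_Suc_right comp_apply rev_map_step_Cons) simp
qed

lemma recursive_rev_map_step:
  assumes "recursive 1 (\<lambda>ys. \<phi> (hd ys))" "recursive n a"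
  shows "recursive n (\<lambda>xs. rev_map_step \<phi> (a xs))"
  unfolding rev_map_step_def Let_def
  by (intro recursive_if_zero recursive_fst_prod_decode recursive_snd_prod_decode recursive_prod_encode
      recursive_pred recursive_Suc recursive_comp1[OF assms(1)] assms(2))

lemma computable_word_rev_map:
  assumes "recursive 1 (\<lambda>ys. \<phi> (hd ys))"
  shows "computable_word (\<lambda>w. rev (map \<phi> w))"
proof -
  have "recursive 1 (\<lambda>ys. snd (prod_decode ((rev_map_step \<phi> ^^ hd ys) (prod_encode (hd ys, 0)))))"
    by (intro recursive_snd_prod_decode recursive_funpow recursive_rev_map_step[OF assms]
        recursive_prod_encode recursive_hd recursive_const)
  then obtain g where "total_recursive 1 g"
    "\<And>c. g [c] = snd (prod_decode ((rev_map_step \<phi> ^^ c) (prod_encode (c, 0))))"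
    unfolding recursive_def by fastforce
  moreover have "snd (prod_decode ((rev_map_step \<phi> ^^ list_encode w) (prod_encode (list_encode w, 0))))
      = list_encode (rev (map \<phi> w))" for w
    using funpow_rev_map_step[OF length_le_list_encode, of w \<phi> "[]"] by simp
  ultimately show ?thesis
    unfolding computable_word_def by auto
qed

lemma computable_word_comp:
  assumes "computable_word h" "computable_word h'"
  shows "computable_word (h \<circ> h')"
proof -
  from assms obtain g g' where g: "total_recursive 1 g" "\<And>w. list_encode (h w) = g [list_encode w]"
    and g': "total_recursive 1 g'" "\<And>w. list_encode (h' w) = g' [list_encode w]"
    unfolding computable_word_def by blast
  have "total_recursive 1 (\<lambda>xs. g (map (\<lambda>f. f xs) [g']))"
    by (rule total_recursive.comp[OF g(1)]) (use g'(1) in simp_all)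
  with g(2) g'(2) show ?thesis
    unfolding computable_word_def by (intro exI[of _ "\<lambda>xs. g [g' xs]"]) simp
qed

text \<open>Iterating \<open>rev_map_step\<close> moves the entries one by one from the front of the input onto an
  accumulator and thus reverses the list; a second pass with \<open>id\<close> undoes the reversal.\<close>
lemma computable_word_map:
  assumes "recursive 1 (\<lambda>ys. \<phi> (hd ys))"
  shows "computable_word (map \<phi>)"
proof -
  have "computable_word ((\<lambda>w. rev (map id w)) \<circ> (\<lambda>w. rev (map \<phi> w)))"
    by (intro computable_word_comp computable_word_rev_map assms) (simp only: id_apply recursive_hd)
  then show ?thesis by (simp add: o_def)
qed

lemma computable_pointwise:
  assumes "recursive 1 (\<lambda>ys. \<phi> (hd ys))"
  shows "computable (\<lambda>p. Some (\<lambda>n. \<phi> (p n)))"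
  unfolding computable_def
  by (rule exI[of _ "map \<phi>"]) (auto simp: computable_word_map[OF assms] init_def)

lemma enumerate_UNIV_nat: "enumerate (UNIV :: nat set) n = n"
  by (induction n) (simp_all add: enumerate_0 enumerate_Suc'' Least_equality)

lemma completion_Suc: "completion \<delta> (\<lambda>n. Suc (q n)) = Some (\<delta> q)"
  by (simp add: completion_def minus1_def enumerate_UNIV_nat)

lemma computable_Suc: "computable (\<lambda>p. Some (\<lambda>n. Suc (p n)))"
  by (rule computable_pointwise[OF recursive_Suc[OF recursive_hd]])

lemma spaceI: "\<delta> p = Some x \<Longrightarrow> x \<in> space \<delta>"
  unfolding space_def by blast

lemma Some_in_space_completion:
  assumes "x \<in> space \<delta>" shows "Some x \<in> space (completion \<delta>)"
proof -
  from assms obtain p where "\<delta> p = Some x" unfolding space_def by blast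
  then have "completion \<delta> (\<lambda>n. Suc (p n)) = Some (Some x)" by (simp add: completion_Suc)
  then show ?thesis by (rule spaceI[of "completion \<delta>"])
qed

lemma realizes_comp_prob_retract_shift:
  assumes D: "D \<subseteq> space \<delta>X" and r: "\<forall>x\<in>space \<delta>X. r (Some x) = {x}"
    and F: "realizes (completion \<delta>X) \<delta>X (comp_dom \<delta>X) r F"
    and G: "realizes \<delta>X \<delta>Y (space \<delta>X) (tot_prob \<delta>Y D f) G"
  shows "realizes (completion \<delta>X) (completion \<delta>Y) (comp_dom \<delta>X) (comp_prob \<delta>Y D f)
           (\<lambda>p. Option.bind (Option.bind (F p) G) (\<lambda>q. Some (\<lambda>n. Suc (q n))))"
  unfolding realizes_def
proof (intro allI impI)
  fix p xo assume "completion \<delta>X p = Some xo \<and> xo \<in> comp_dom \<delta>X"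
  then obtain q x where q: "F p = Some q" "\<delta>X q = Some x" "x \<in> r xo"
    using F unfolding realizes_def by blast
  then obtain q' y where q': "G q = Some q'" "\<delta>Y q' = Some y" "y \<in> tot_prob \<delta>Y D f x"
    using G spaceI[of \<delta>X q x] unfolding realizes_def by blast
  have "Some y \<in> comp_prob \<delta>Y D f xo"
  proof (cases "\<exists>x'\<in>D. xo = Some x'")
    case True
    with D r q(3) have "xo = Some x" "x \<in> D" by auto
    with q'(3) show ?thesis by (simp add: comp_prob_def tot_prob_def)
  next
    case False
    then have "comp_prob \<delta>Y D f xo = space (completion \<delta>Y)"
      by (auto simp: comp_prob_def split: option.split)
    with spaceI[of \<delta>Y, OF q'(2)] show ?thesis by (simp add: Some_in_space_completion)
  qed
  with q(1) q'(1,2) show "\<exists>q y. Option.bind (Option.bind (F p) G) (\<lambda>q. Some (\<lambda>n. Suc (q n))) = Some q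
      \<and> completion \<delta>Y q = Some y \<and> y \<in> comp_prob \<delta>Y D f xo"
    by (simp add: completion_Suc)
qed

lemma realizes_tot_prob_shift_retract:
  assumes f: "\<forall>x\<in>D. f x \<subseteq> space \<delta>Y" and r: "\<forall>y\<in>space \<delta>Y. r (Some y) = {y}"
    and R: "realizes (completion \<delta>Y) \<delta>Y (comp_dom \<delta>Y) r R"
    and G: "realizes (completion \<delta>X) (completion \<delta>Y) (comp_dom \<delta>X) (comp_prob \<delta>Y D f) G"
  shows "realizes \<delta>X \<delta>Y (space \<delta>X) (tot_prob \<delta>Y D f)
           (\<lambda>p. Option.bind (Option.bind (Some (\<lambda>n. Suc (p n))) G) R)"
  unfolding realizes_def
proof (intro allI impI)
  fix p x assume "\<delta>X p = Some x \<and> x \<in> space \<delta>X"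
  then have "completion \<delta>X (\<lambda>n. Suc (p n)) = Some (Some x)" "Some x \<in> comp_dom \<delta>X"
    by (simp_all add: completion_Suc comp_dom_def Some_in_space_completion)
  with G obtain q yo where q: "G (\<lambda>n. Suc (p n)) = Some q" "completion \<delta>Y q = Some yo"
      "yo \<in> comp_prob \<delta>Y D f (Some x)"
    unfolding realizes_def by blast
  with R spaceI[of "completion \<delta>Y" q] obtain q' y where q': "R q = Some q'" "\<delta>Y q' = Some y" "y \<in> r yo"
    unfolding realizes_def comp_dom_def by blast
  have "y \<in> tot_prob \<delta>Y D f x"
  proof (cases "x \<in> D")
    case True
    with q(3) obtain z where z: "yo = Some z" "z \<in> f x" by (auto simp: comp_prob_def)
    with f True have "z \<in> space \<delta>Y" by blast
    with r q'(3) z True show ?thesis by (simp add: tot_prob_def)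
  next
    case False
    with q'(2) show ?thesis by (simp add: tot_prob_def spaceI)
  qed
  with q(1) q'(1,2) show "\<exists>q y. Option.bind (Option.bind (Some (\<lambda>n. Suc (p n))) G) R = Some q
      \<and> \<delta>Y q = Some y \<and> y \<in> tot_prob \<delta>Y D f x"
    by simp
qed

lemma comp_prob_sW_le_tot_prob:
  assumes "multi_retraceable \<delta>X" and "D \<subseteq> space \<delta>X"
  shows "sW_le (completion \<delta>X) (completion \<delta>Y) (comp_dom \<delta>X) (comp_prob \<delta>Y D f)
           \<delta>X \<delta>Y (space \<delta>X) (tot_prob \<delta>Y D f)"
proof -
  obtain r F where r: "\<forall>x\<in>space \<delta>X. r (Some x) = {x}" and "computable F"
    and F: "realizes (completion \<delta>X) \<delta>X (comp_dom \<delta>X) r F"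
    using assms(1) unfolding multi_retraceable_def by blast
  then show ?thesis
    unfolding sW_le_def
    by (intro exI[of _ "\<lambda>q. Some (\<lambda>n. Suc (q n))"] exI[of _ F] conjI allI impI computable_Suc
        realizes_comp_prob_retract_shift[OF assms(2) r F])
qed

lemma tot_prob_sW_le_comp_prob:
  assumes "multi_retraceable \<delta>Y" and "\<forall>x\<in>D. f x \<subseteq> space \<delta>Y"
  shows "sW_le \<delta>X \<delta>Y (space \<delta>X) (tot_prob \<delta>Y D f)
           (completion \<delta>X) (completion \<delta>Y) (comp_dom \<delta>X) (comp_prob \<delta>Y D f)"
proof -
  obtain r R where r: "\<forall>y\<in>space \<delta>Y. r (Some y) = {y}" and "computable R"
    and R: "realizes (completion \<delta>Y) \<delta>Y (comp_dom \<delta>Y) r R"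
    using assms(1) unfolding multi_retraceable_def by blast
  then show ?thesis
    unfolding sW_le_def
    by (intro exI[of _ R] exI[of _ "\<lambda>p. Some (\<lambda>n. Suc (p n))"] conjI allI impI computable_Suc
        realizes_tot_prob_shift_retract[OF assms(2) r R])
qed

theorem lemma4p6:
  fixes \<delta>X :: "baire \<Rightarrow> 'a option" and \<delta>Y :: "baire \<Rightarrow> 'b option"
    and D :: "'a set" and f :: "'a \<Rightarrow> 'b set"
  assumes "problem \<delta>X \<delta>Y D f"
  shows "(multi_retraceable \<delta>X \<longrightarrow>
            sW_le (completion \<delta>X) (completion \<delta>Y) (comp_dom \<delta>X) (comp_prob \<delta>Y D f)
                  \<delta>X \<delta>Y (space \<delta>X) (tot_prob \<delta>Y D f))
       \<and> (multi_retraceable \<delta>Y \<longrightarrow>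
            sW_le \<delta>X \<delta>Y (space \<delta>X) (tot_prob \<delta>Y D f)
                  (completion \<delta>X) (completion \<delta>Y) (comp_dom \<delta>X) (comp_prob \<delta>Y D f))"
proof -
  from assms have "D \<subseteq> space \<delta>X" "\<forall>x\<in>D. f x \<subseteq> space \<delta>Y"
    unfolding problem_def by auto
  then show ?thesis
    by (simp add: comp_prob_sW_le_tot_prob tot_prob_sW_le_comp_prob)
qed

end
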